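(* For $t\in\mathbb R$ let $a_n=a_n(t)>0$ ($n\ge1$, $a_0=0$) be the recurrence coefficients in $a_{n+1}p_{n+1}(x)=xp_n(x)-a_np_{n-1}(x)$ of the orthonormal polynomials for the weight $\exp(-x^4/4-tx^2)$ on $\mathbb R$. Then for all $n\ge1$: $$a_n^2\big(a_{n-1}^2+a_n^2+a_{n+1}^2\big)+2ta_n^2=n,$$ $$4a_n^3\ddot a_n=(3a_n^4+2ta_n^2-n)(a_n^4+2ta_n^2+n),$$ and $u_n=a_n^2$ satisfies the Painlevé IV equation $$\ddot u=\frac{\dot u^2}{2u}+\frac{3u^3}{2}+4tu^2+2(t^2-\alpha)u+\frac{\beta}{u}\quad\text{with }\alpha=-\frac n2,\ \beta=-\frac{n^2}{2}.$$
   Context: Dots denote $d/dt$. *)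

theory Defs
  imports "HOL-Analysis.Analysis" "HOL-Computational_Algebra.Polynomial"
begin

definition freud_weight :: "real \<Rightarrow> real \<Rightarrow> real" where
  "freud_weight t x = exp (- (x ^ 4) / 4 - t * x ^ 2)"

definition orthonormal_system :: "real \<Rightarrow> (nat \<Rightarrow> real poly) \<Rightarrow> bool" where
  "orthonormal_system t p \<longleftrightarrow>
     (\<forall>n. degree (p n) = n \<and> lead_coeff (p n) > 0) \<and>
     (\<forall>m n. ((\<lambda>x. poly (p m) x * poly (p n) x * freud_weight t x)
               has_integral (if m = n then 1 else 0)) UNIV)"

end

theory Submission
  imports Defs "HOL-Real_Asymp.Real_Asymp"
begin

(* The string equation comes from integrating (p_n p_{n-1})' w by parts: the left side gives n / a_n,
   and the right side, the integral of p_n p_{n-1} (x^3 + 2 t x) w, is evaluated with the recurrence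
   x p_n = a_{n+1} p_{n+1} + a_n p_{n-1}. Since the t-derivative of w is -x^2 w, differentiating the
   normalisation of p_n^2 w in t gives k_n' / k_n = (a_n^2 + a_{n+1}^2) / 2 for the leading coefficient
   k_n of p_n, and a_n = k_{n-1} / k_n yields the Toda equation a_n' = a_n (a_{n-1}^2 - a_{n+1}^2) / 2.
   Differentiating once more, eliminating a_{n-2} and a_{n+2} with the string equations at n - 1 and
   n + 1 and then a_{n-1}^2 + a_{n+1}^2 with the one at n gives the equation for a_n'', of which
   Painleve IV for u = a_n^2 is a rewriting. Differentiability in t follows inductively from the
   recurrence, the moments of w being differentiable under the integral sign. *)

lemma poly_expansion_in_degree_basis:
  fixes P :: "nat \<Rightarrow> 'a::field poly"
  assumes deg: "\<And>i. degree (P i) = i" and nz: "\<And>i. P i \<noteq> 0" and "degree q \<le> n"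
  shows "\<exists>c. q = (\<Sum>i\<le>n. smult (c i) (P i))"
  using \<open>degree q \<le> n\<close>
proof (induction n arbitrary: q)
  case 0
  have "P 0 = [:lead_coeff (P 0):]" "q = [:coeff q 0:]"
    using deg[of 0] 0 by (auto simp: degree_0_id)
  then have "q = smult (coeff q 0 / lead_coeff (P 0)) (P 0)"
    using nz[of 0] by (metis leading_coeff_0_iff nonzero_eq_divide_eq smult_pCons smult_0_right)
  then show ?case by auto
next
  case (Suc n)
  define c where "c = coeff q (Suc n) / lead_coeff (P (Suc n))"
  define r where "r = q - smult c (P (Suc n))"
  have "lead_coeff (P (Suc n)) \<noteq> 0"
    using nz by simp
  then have "coeff r (Suc n) = 0"
    using deg[of "Suc n"] by (simp add: r_def c_def)
  moreover have "degree r \<le> Suc n"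
    using Suc.prems deg unfolding r_def by (intro degree_diff_le) auto
  ultimately have "degree r \<le> n"
    by (metis le_SucE leading_coeff_0_iff degree_0 nat.distinct(1))
  then obtain d where d: "r = (\<Sum>i\<le>n. smult (d i) (P i))"
    using Suc.IH by blast
  have "(\<Sum>i\<le>n. smult ((d(Suc n := c)) i) (P i)) = r"
    unfolding d by (intro sum.cong) auto
  then have "q = (\<Sum>i\<le>Suc n. smult ((d(Suc n := c)) i) (P i))"
    by (simp add: r_def)
  then show ?case by blast
qed

lemma abs_power_le_one_plus_even_power: "\<bar>x::real\<bar> ^ j \<le> 1 + x ^ (2 * j)"
proof (cases "\<bar>x\<bar> \<le> 1")
  case True
  then have "\<bar>x\<bar> ^ j \<le> 1" by (simp add: power_le_one)
  moreover have "0 \<le> x ^ (2 * j)" by (simp add: power_mult)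
  ultimately show ?thesis by linarith
next
  case False
  then have "\<bar>x\<bar> ^ j \<le> \<bar>x\<bar> ^ (2 * j)" by (intro power_increasing) auto
  then show ?thesis by (simp add: power_even_abs)
qed

lemma abs_exp_minus_one_minus_le: "\<bar>exp y - 1 - y\<bar> \<le> (y::real)\<^sup>2 * exp \<bar>y\<bar>"
proof -
  obtain \<theta> where \<theta>: "\<bar>\<theta>\<bar> \<le> \<bar>y\<bar>" "exp y = (\<Sum>m<2. y ^ m / fact m) + exp \<theta> / fact 2 * y\<^sup>2"
    using Maclaurin_exp_le[of y 2] by blast
  then have "\<bar>exp y - 1 - y\<bar> = exp \<theta> / 2 * y\<^sup>2"
    by (simp add: eval_nat_numeral)
  also have "\<dots> \<le> exp \<bar>y\<bar> * y\<^sup>2"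
  proof (intro mult_right_mono)
    have "exp \<theta> \<le> exp \<bar>y\<bar>"
      using \<theta>(1) by (simp add: abs_le_iff)
    then show "exp \<theta> / 2 \<le> exp \<bar>y\<bar>"
      using exp_gt_zero[of \<theta>] by linarith
  qed simp
  finally show ?thesis
    by (simp add: mult.commute)
qed

lemma real_differentiable_sqrt:
  fixes f :: "real \<Rightarrow> real"
  assumes "f differentiable (at t)" "f t > 0"
  shows "(\<lambda>s. sqrt (f s)) differentiable (at t)"
  using assms DERIV_chain2[OF DERIV_real_sqrt] unfolding real_differentiable_def by blast

lemma has_integral_derivative_vanishing_at_infinity:
  fixes F f :: "real \<Rightarrow> real"
  assumes deriv: "\<And>x. (F has_real_derivative f x) (at x)"
    and lim: "(F \<longlongrightarrow> 0) at_infinity" and int: "f integrable_on UNIV"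
  shows "(f has_integral 0) UNIV"
proof -
  define I where "I = integral UNIV f"
  have I: "(f has_integral I) UNIV"
    using int unfolding I_def by (rule integrable_integral)
  have small: "\<bar>I\<bar> < 3 * e" if "e > 0" for e
  proof -
    have "\<forall>e>0. \<exists>B>0. \<forall>a b. ball 0 B \<subseteq> cbox a b \<longrightarrow> \<bar>integral (cbox a b) f - I\<bar> < e"
      using I unfolding has_integral_alt'[of f I UNIV] by simp
    then obtain B where "B > 0" and B: "\<And>a b. ball 0 B \<subseteq> cbox a b \<Longrightarrow> \<bar>integral (cbox a b) f - I\<bar> < e"
      using \<open>e > 0\<close> by blast
    obtain b where b: "\<And>x. b \<le> norm x \<Longrightarrow> \<bar>F x\<bar> < e"
      using lim \<open>e > 0\<close> unfolding tendsto_iff eventually_at_infinity by fastforce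
    define R where "R = max B b + 1"
    have "(f has_integral (F R - F (- R))) {- R..R}"
      using deriv \<open>B > 0\<close> unfolding R_def
      by (intro fundamental_theorem_of_calculus)
         (auto simp: has_real_derivative_iff_has_vector_derivative[symmetric] intro: DERIV_subset)
    moreover have "ball 0 B \<subseteq> cbox (- R) R"
      by (auto simp: R_def dist_real_def)
    ultimately have "\<bar>(F R - F (- R)) - I\<bar> < e"
      using B[of "- R" R] by (simp add: integral_unique)
    moreover have "\<bar>F R\<bar> < e" "\<bar>F (- R)\<bar> < e"
      using b[of R] b[of "- R"] by (auto simp: R_def)
    ultimately show ?thesis by linarith
  qed
  have "I = 0"
    using small[of "\<bar>I\<bar> / 3"] by fastforce
  then show ?thesis
    using I by simp
qed

lemma toda_string_second_derivative_identity:
  fixes x0 x1 x2 x3 x4 t N :: real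
  assumes "x1\<^sup>2 * (x0\<^sup>2 + x1\<^sup>2 + x2\<^sup>2) + 2 * t * x1\<^sup>2 = N - 1"
    and "x2\<^sup>2 * (x1\<^sup>2 + x2\<^sup>2 + x3\<^sup>2) + 2 * t * x2\<^sup>2 = N"
    and "x3\<^sup>2 * (x2\<^sup>2 + x3\<^sup>2 + x4\<^sup>2) + 2 * t * x3\<^sup>2 = N + 1"
  shows "4 * x2 ^ 3 * (x2 * ((x1\<^sup>2 - x3\<^sup>2)\<^sup>2 / 4 + (x1\<^sup>2 * (x0\<^sup>2 - x2\<^sup>2) - x3\<^sup>2 * (x2\<^sup>2 - x4\<^sup>2)) / 2))
           = (3 * x2 ^ 4 + 2 * t * x2\<^sup>2 - N) * (x2 ^ 4 + 2 * t * x2\<^sup>2 + N)"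
  using assms by algebra

lemma painleve_iv_of_square:
  fixes y y' y'' t N :: real
  assumes "y > 0" and "4 * y ^ 3 * y'' = (3 * y ^ 4 + 2 * t * y\<^sup>2 - N) * (y ^ 4 + 2 * t * y\<^sup>2 + N)"
  shows "2 * y'\<^sup>2 + 2 * y * y'' = (2 * y * y')\<^sup>2 / (2 * y\<^sup>2) + 3 * (y\<^sup>2) ^ 3 / 2 + 4 * t * (y\<^sup>2)\<^sup>2
           + 2 * (t\<^sup>2 + N / 2) * y\<^sup>2 - N\<^sup>2 / (2 * y\<^sup>2)"
proof -
  have "y * y'' = (3 * y ^ 4 + 2 * t * y\<^sup>2 - N) * (y ^ 4 + 2 * t * y\<^sup>2 + N) / (4 * y\<^sup>2)"
    using assms by (simp add: field_simps power2_eq_square power3_eq_cube)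
  then show ?thesis
    using assms(1) by (simp add: field_simps) algebra
qed

lemma square_has_second_derivative:
  fixes f f' :: "real \<Rightarrow> real"
  assumes f': "\<And>s. (f has_real_derivative f' s) (at s)" and f'': "(f' has_real_derivative f'') (at t)"
  shows "((\<lambda>s. (f s)\<^sup>2) has_real_derivative 2 * f t * f' t) (at t)"
    and "(deriv (\<lambda>s. (f s)\<^sup>2) has_real_derivative 2 * (f' t)\<^sup>2 + 2 * f t * f'') (at t)"
proof -
  have d: "((\<lambda>s. (f s)\<^sup>2) has_real_derivative 2 * f s * f' s) (at s)" for s
    using f' by (auto intro!: derivative_eq_intros)
  then show "((\<lambda>s. (f s)\<^sup>2) has_real_derivative 2 * f t * f' t) (at t)" .
  have "deriv (\<lambda>s. (f s)\<^sup>2) = (\<lambda>s. 2 * f s * f' s)"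
    using d DERIV_imp_deriv by blast
  then show "(deriv (\<lambda>s. (f s)\<^sup>2) has_real_derivative 2 * (f' t)\<^sup>2 + 2 * f t * f'') (at t)"
    using f' f'' by (auto intro!: derivative_eq_intros simp: power2_eq_square)
qed

definition has_coeffwise_derivative :: "(real \<Rightarrow> real poly) \<Rightarrow> real poly \<Rightarrow> real \<Rightarrow> bool" where
  "has_coeffwise_derivative Q D t \<longleftrightarrow> (\<forall>i. ((\<lambda>s. coeff (Q s) i) has_real_derivative coeff D i) (at t))"

definition coeffs_differentiable :: "(real \<Rightarrow> real poly) \<Rightarrow> bool" where
  "coeffs_differentiable Q \<longleftrightarrow> (\<forall>i t. (\<lambda>s. coeff (Q s) i) differentiable (at t))"

lemma has_coeffwise_derivative_const: "has_coeffwise_derivative (\<lambda>s. q) 0 t"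
  unfolding has_coeffwise_derivative_def by simp

lemma has_coeffwise_derivative_diff:
  "has_coeffwise_derivative Q D t \<Longrightarrow> has_coeffwise_derivative R E t
    \<Longrightarrow> has_coeffwise_derivative (\<lambda>s. Q s - R s) (D - E) t"
  unfolding has_coeffwise_derivative_def by (auto intro!: DERIV_diff)

lemma has_coeffwise_derivative_smult:
  assumes "(f has_real_derivative f') (at t)" "has_coeffwise_derivative Q D t"
  shows "has_coeffwise_derivative (\<lambda>s. smult (f s) (Q s)) (smult f' (Q t) + smult (f t) D) t"
  unfolding has_coeffwise_derivative_def
proof
  fix i
  have "((\<lambda>s. f s * coeff (Q s) i) has_real_derivative f t * coeff D i + f' * coeff (Q t) i) (at t)"
    using assms unfolding has_coeffwise_derivative_def by (intro DERIV_mult') auto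
  then show "((\<lambda>s. coeff (smult (f s) (Q s)) i) has_real_derivative coeff (smult f' (Q t) + smult (f t) D) i) (at t)"
    by (simp add: algebra_simps)
qed

lemma has_coeffwise_derivative_mult:
  assumes "has_coeffwise_derivative Q D t" "has_coeffwise_derivative R E t"
  shows "has_coeffwise_derivative (\<lambda>s. Q s * R s) (D * R t + Q t * E) t"
  unfolding has_coeffwise_derivative_def
proof
  fix n
  have "((\<lambda>s. \<Sum>i\<le>n. coeff (Q s) i * coeff (R s) (n - i)) has_real_derivative
        (\<Sum>i\<le>n. coeff (Q t) i * coeff E (n - i) + coeff D i * coeff (R t) (n - i))) (at t)"
    using assms unfolding has_coeffwise_derivative_def by (intro DERIV_sum DERIV_mult') auto
  then show "((\<lambda>s. coeff (Q s * R s) n) has_real_derivative coeff (D * R t + Q t * E) n) (at t)"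
    by (simp only: coeff_mult coeff_add sum.distrib[symmetric]) (simp add: algebra_simps)
qed

lemma coeffs_differentiable_if_has_coeffwise_derivative:
  "(\<And>t. \<exists>D. has_coeffwise_derivative Q D t) \<Longrightarrow> coeffs_differentiable Q"
  unfolding coeffs_differentiable_def has_coeffwise_derivative_def real_differentiable_def by metis

lemma degree_le_if_has_coeffwise_derivative:
  assumes "\<And>s. degree (Q s) \<le> N" "has_coeffwise_derivative Q D t"
  shows "degree D \<le> N"
proof (rule degree_le, intro allI impI)
  fix i assume "N < i"
  then have "coeff (Q s) i = 0" for s
    using assms(1)[of s] by (intro coeff_eq_0) linarith
  moreover have "((\<lambda>s. coeff (Q s) i) has_real_derivative coeff D i) (at t)"
    using assms(2) unfolding has_coeffwise_derivative_def by blast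
  ultimately have "((\<lambda>s. 0) has_real_derivative coeff D i) (at t)"
    by simp
  then show "coeff D i = 0"
    using DERIV_const DERIV_unique by blast
qed

lemma has_coeffwise_derivative_exists:
  assumes "\<And>s. degree (Q s) \<le> N" "coeffs_differentiable Q"
  shows "\<exists>D. has_coeffwise_derivative Q D t"
proof
  define D where "D = (\<Sum>i\<le>N. monom (deriv (\<lambda>s. coeff (Q s) i) t) i)"
  show "has_coeffwise_derivative Q D t"
    unfolding has_coeffwise_derivative_def
  proof
    fix i
    show "((\<lambda>s. coeff (Q s) i) has_real_derivative coeff D i) (at t)"
    proof (cases "i \<le> N")
      case True
      then show ?thesis
        using assms(2) unfolding coeffs_differentiable_def
        by (simp add: D_def coeff_sum DERIV_deriv_iff_real_differentiable)
    next
      case False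
      then have "coeff (Q s) i = 0" for s
        using assms(1)[of s] by (intro coeff_eq_0) linarith
      then show ?thesis
        using False by (simp add: D_def coeff_sum)
    qed
  qed
qed

lemma freud_weight_pos: "freud_weight t x > 0"
  unfolding freud_weight_def by simp

lemma freud_weight_shift: "freud_weight (t + h) x = freud_weight t x * exp (- h * x\<^sup>2)"
  unfolding freud_weight_def by (simp add: exp_add[symmetric] algebra_simps)

lemma freud_weight_has_real_derivative:
  "(freud_weight t has_real_derivative freud_weight t x * (- (x ^ 3) - 2 * t * x)) (at x)"
  unfolding freud_weight_def[abs_def]
  by (rule derivative_eq_intros refl | simp)+

lemma power_freud_weight_tendsto_zero: "((\<lambda>x. x ^ k * freud_weight t x) \<longlongrightarrow> 0) at_infinity"
  unfolding at_infinity_eq_at_top_bot freud_weight_def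
  by (intro filterlim_sup; real_asymp)

lemma poly_freud_weight_tendsto_zero: "((\<lambda>x. poly q x * freud_weight t x) \<longlongrightarrow> 0) at_infinity"
proof -
  have "((\<lambda>x. \<Sum>i\<le>degree q. coeff q i * (x ^ i * freud_weight t x)) \<longlongrightarrow> 0) at_infinity"
    by (intro tendsto_null_sum tendsto_mult_right_zero power_freud_weight_tendsto_zero)
  then show ?thesis
    by (simp add: poly_altdef sum_distrib_right mult.assoc)
qed

lemma freud_difference_quotient_bound:
  assumes h: "h \<noteq> 0" "\<bar>h\<bar> < 1"
  shows "\<bar>(x ^ k * freud_weight (t + h) x - x ^ k * freud_weight t x) / h + x ^ (k + 2) * freud_weight t x\<bar>
           \<le> \<bar>h\<bar> * ((1 + x ^ (2 * (k + 4))) * freud_weight (t - 1) x)"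
proof -
  define y where "y = - h * x\<^sup>2"
  have "freud_weight (t + h) x = freud_weight t x * exp y"
    unfolding y_def by (rule freud_weight_shift)
  then have "(x ^ k * freud_weight (t + h) x - x ^ k * freud_weight t x) / h + x ^ (k + 2) * freud_weight t x
          = x ^ k * freud_weight t x * ((exp y - 1 - y) / h)"
    using h by (simp add: y_def field_simps power_add power2_eq_square)
  also have "\<bar>\<dots>\<bar> = \<bar>x\<bar> ^ k * freud_weight t x * (\<bar>exp y - 1 - y\<bar> / \<bar>h\<bar>)"
    using freud_weight_pos[of t x] by (simp add: abs_mult power_abs)
  also have "\<dots> \<le> \<bar>x\<bar> ^ k * freud_weight t x * (y\<^sup>2 * exp \<bar>y\<bar> / \<bar>h\<bar>)"
    using freud_weight_pos[of t x]
    by (intro mult_left_mono divide_right_mono abs_exp_minus_one_minus_le) auto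
  also have "\<dots> = \<bar>h\<bar> * (\<bar>x\<bar> ^ (k + 4) * (freud_weight t x * exp (\<bar>h\<bar> * x\<^sup>2)))"
    using h by (simp add: y_def abs_mult power_add power2_eq_square
        field_simps eval_nat_numeral)
  also have "\<dots> \<le> \<bar>h\<bar> * ((1 + x ^ (2 * (k + 4))) * freud_weight (t - 1) x)"
  proof (intro mult_left_mono mult_mono abs_power_le_one_plus_even_power)
    have "freud_weight t x * exp (\<bar>h\<bar> * x\<^sup>2) = freud_weight (t - \<bar>h\<bar>) x"
      using freud_weight_shift[of t "- \<bar>h\<bar>" x] by simp
    also have "\<dots> \<le> freud_weight (t - 1) x"
      unfolding freud_weight_def using h by (auto intro!: mult_right_mono)
    finally show "freud_weight t x * exp (\<bar>h\<bar> * x\<^sup>2) \<le> freud_weight (t - 1) x" .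
  qed (auto simp: freud_weight_def intro!: add_nonneg_nonneg zero_le_even_power)
  finally show ?thesis .
qed

lemma orthonormal_system_poly_integrable:
  assumes "orthonormal_system t P"
  shows "(\<lambda>x. poly q x * freud_weight t x) integrable_on UNIV"
proof -
  \<comment> \<open>P 0 is a nonzero constant, so q is a combination of the products P i * P 0,
    whose integrability is part of orthonormality.\<close>
  have deg: "\<And>i. degree (P i) = i" and lc: "\<And>i. lead_coeff (P i) > 0"
    and int: "\<And>i. (\<lambda>x. poly (P i) x * poly (P 0) x * freud_weight t x) integrable_on UNIV"
    using assms unfolding orthonormal_system_def by blast+
  define c where "c = coeff (P 0) 0"
  have "c > 0" and P0: "P 0 = [:c:]"
    using lc[of 0] deg[of 0] by (auto simp: c_def degree_0_id)
  obtain d where d: "smult (1 / c) q = (\<Sum>i\<le>degree q. smult (d i) (P i))"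
    using poly_expansion_in_degree_basis[OF deg, of "smult (1 / c) q" "degree q"] lc
    by (metis degree_smult_le less_irrefl leading_coeff_0_iff)
  have "poly q x * freud_weight t x = (\<Sum>i\<le>degree q. d i * (poly (P i) x * poly (P 0) x * freud_weight t x))" for x
  proof -
    have "poly q x = c * poly (smult (1 / c) q) x"
      using \<open>c > 0\<close> by simp
    then show ?thesis
      unfolding d P0 by (simp add: poly_sum sum_distrib_left sum_distrib_right mult_ac)
  qed
  moreover have "(\<lambda>x. \<Sum>i\<le>degree q. d i * (poly (P i) x * poly (P 0) x * freud_weight t x)) integrable_on UNIV"
    using int by (intro integrable_sum integrable_on_mult_right) auto
  ultimately show ?thesis
    by simp
qed

definition freud_moment :: "nat \<Rightarrow> real \<Rightarrow> real" where
  "freud_moment k t = integral UNIV (\<lambda>x. x ^ k * freud_weight t x)"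

definition freud_functional :: "real \<Rightarrow> real poly \<Rightarrow> real" where
  "freud_functional t q = integral UNIV (\<lambda>x. poly q x * freud_weight t x)"

locale freud_orthonormal =
  fixes p :: "real \<Rightarrow> nat \<Rightarrow> real poly"
  assumes orthonormal: "\<And>t. orthonormal_system t (p t)"
begin

lemma poly_integrable: "(\<lambda>x. poly q x * freud_weight t x) integrable_on UNIV"
  using orthonormal by (rule orthonormal_system_poly_integrable)

lemma has_integral_freud_functional:
  "((\<lambda>x. poly q x * freud_weight t x) has_integral freud_functional t q) UNIV"
  unfolding freud_functional_def using poly_integrable by (rule integrable_integral)

lemma has_integral_freud_moment: "((\<lambda>x. x ^ k * freud_weight t x) has_integral freud_moment k t) UNIV"
  unfolding freud_moment_def using poly_integrable[of "monom 1 k"]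
  by (simp add: poly_monom integrable_integral)

lemma freud_functional_add: "freud_functional t (q + r) = freud_functional t q + freud_functional t r"
  unfolding freud_functional_def by (simp add: distrib_right integral_add poly_integrable)

lemma freud_functional_diff: "freud_functional t (q - r) = freud_functional t q - freud_functional t r"
  unfolding freud_functional_def by (simp add: left_diff_distrib integral_diff poly_integrable)

lemma freud_functional_smult: "freud_functional t (smult c q) = c * freud_functional t q"
  unfolding freud_functional_def by (simp add: mult.assoc)

lemma freud_functional_sum:
  "finite A \<Longrightarrow> freud_functional t (\<Sum>i\<in>A. q i) = (\<Sum>i\<in>A. freud_functional t (q i))"
  by (induction A rule: finite_induct) (simp_all add: freud_functional_add freud_functional_def[of _ 0])

lemma has_integral_power_mult_poly:
  assumes "degree q \<le> N"
  shows "((\<lambda>x. x ^ e * poly q x * freud_weight t x) has_integral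
           (\<Sum>i\<le>N. coeff q i * freud_moment (i + e) t)) UNIV"
proof -
  have "((\<lambda>x. \<Sum>i\<le>N. coeff q i * (x ^ (i + e) * freud_weight t x)) has_integral
          (\<Sum>i\<le>N. coeff q i * freud_moment (i + e) t)) UNIV"
    by (intro has_integral_sum has_integral_mult_right has_integral_freud_moment) auto
  moreover have "poly q x = (\<Sum>i\<le>N. coeff q i * x ^ i)" for x
    by (subst poly_as_sum_of_monoms'[OF assms, symmetric]) (simp add: poly_sum poly_monom)
  then have "(\<Sum>i\<le>N. coeff q i * (x ^ (i + e) * freud_weight t x)) = x ^ e * poly q x * freud_weight t x" for x
    by (simp add: sum_distrib_left sum_distrib_right power_add algebra_simps)
  ultimately show ?thesis by simp
qed

lemma freud_functional_eq_moments:
  assumes "degree q \<le> N"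
  shows "freud_functional t q = (\<Sum>i\<le>N. coeff q i * freud_moment i t)"
proof -
  have "((\<lambda>x. poly q x * freud_weight t x) has_integral (\<Sum>i\<le>N. coeff q i * freud_moment i t)) UNIV"
    using has_integral_power_mult_poly[OF assms, where e = 0] by simp
  then show ?thesis
    by (rule has_integral_unique[OF has_integral_freud_functional])
qed

lemma freud_functional_x2_mult:
  assumes "degree q \<le> N"
  shows "freud_functional t ([:0, 0, 1:] * q) = (\<Sum>i\<le>N. coeff q i * freud_moment (i + 2) t)"
proof -
  have "((\<lambda>x. x\<^sup>2 * poly q x * freud_weight t x) has_integral freud_functional t ([:0, 0, 1:] * q)) UNIV"
    using has_integral_freud_functional[of "[:0, 0, 1:] * q" t] by (simp add: power2_eq_square mult.assoc)
  then show ?thesis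
    using has_integral_power_mult_poly[OF assms, where e = 2] by (rule has_integral_unique)
qed

lemma freud_moment_has_real_derivative:
  "(freud_moment k has_real_derivative - freud_moment (k + 2) t) (at t)"
proof -
  define B where "B = (\<lambda>x. (1 + x ^ (2 * (k + 4))) * freud_weight (t - 1) x)"
  have "B integrable_on UNIV"
    using poly_integrable[of "1 + monom 1 (2 * (k + 4))" "t - 1"] by (simp add: B_def poly_monom)
  define g where "g h = (freud_moment k (t + h) - freud_moment k t) / h + freud_moment (k + 2) t" for h
  have g_bound: "\<bar>g h\<bar> \<le> \<bar>h\<bar> * integral UNIV B" if "h \<noteq> 0" "\<bar>h\<bar> < 1" for h
  proof -
    define \<phi> where "\<phi> = (\<lambda>x. (x ^ k * freud_weight (t + h) x - x ^ k * freud_weight t x) / h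
                              + x ^ (k + 2) * freud_weight t x)"
    have "(\<phi> has_integral g h) UNIV"
      unfolding g_def \<phi>_def
      by (intro has_integral_add has_integral_divide has_integral_diff has_integral_freud_moment)
    then have "\<phi> integrable_on UNIV" and g_eq: "\<bar>g h\<bar> = norm (integral UNIV \<phi>)"
      by (auto simp: integral_unique)
    have "norm (integral UNIV \<phi>) \<le> integral UNIV (\<lambda>x. \<bar>h\<bar> * B x)"
      using \<open>\<phi> integrable_on UNIV\<close> \<open>B integrable_on UNIV\<close>
    proof (rule integral_norm_bound_integral[OF _ integrable_on_mult_right])
      show "norm (\<phi> x) \<le> \<bar>h\<bar> * B x" for x
        using freud_difference_quotient_bound[OF that] by (simp add: \<phi>_def B_def)
    qed
    then show ?thesis
      using g_eq by simp
  qed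
  have "(g \<longlongrightarrow> 0) (at 0)"
  proof (rule Lim_null_comparison)
    show "\<forall>\<^sub>F h in at 0. norm (g h) \<le> \<bar>h\<bar> * integral UNIV B"
      unfolding eventually_at using g_bound by (intro exI[of _ 1]) auto
    show "((\<lambda>h. \<bar>h\<bar> * integral UNIV B) \<longlongrightarrow> 0) (at 0)"
      by (intro tendsto_eq_intros) auto
  qed
  then have "((\<lambda>h. g h - freud_moment (k + 2) t) \<longlongrightarrow> - freud_moment (k + 2) t) (at 0)"
    by (auto intro: tendsto_eq_intros)
  then show ?thesis
    unfolding DERIV_def g_def by simp
qed

lemma freud_functional_has_real_derivative:
  assumes deg: "\<And>s. degree (Q s) \<le> N" and D: "has_coeffwise_derivative Q D t"
  shows "((\<lambda>s. freud_functional s (Q s)) has_real_derivative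
            freud_functional t D - freud_functional t ([:0, 0, 1:] * Q t)) (at t)"
proof -
  have "((\<lambda>s. \<Sum>i\<le>N. coeff (Q s) i * freud_moment i s) has_real_derivative
          (\<Sum>i\<le>N. coeff (Q t) i * (- freud_moment (i + 2) t) + coeff D i * freud_moment i t)) (at t)"
    using D freud_moment_has_real_derivative unfolding has_coeffwise_derivative_def
    by (intro DERIV_sum DERIV_mult') auto
  moreover have "freud_functional t D = (\<Sum>i\<le>N. coeff D i * freud_moment i t)"
    using degree_le_if_has_coeffwise_derivative[OF deg D] by (rule freud_functional_eq_moments)
  ultimately show ?thesis
    using freud_functional_eq_moments[OF deg] freud_functional_x2_mult[OF deg]
    by (simp add: sum.distrib sum_subtractf algebra_simps)
qed

lemma degree_p: "degree (p t n) = n"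
  using orthonormal[of t] unfolding orthonormal_system_def by blast

lemma lead_coeff_p_pos: "coeff (p t n) n > 0"
  using orthonormal[of t] unfolding orthonormal_system_def by (metis degree_p)

lemma freud_functional_p_p: "freud_functional t (p t m * p t n) = (if m = n then 1 else 0)"
  using orthonormal[of t] unfolding orthonormal_system_def freud_functional_def
  by (simp add: integral_unique)

lemma freud_functional_mult_p:
  assumes "degree r \<le> n"
  shows "freud_functional t (r * p t n) = coeff r n / coeff (p t n) n"
proof -
  have "p t i \<noteq> 0" for i
    using lead_coeff_p_pos[of t i] by auto
  then obtain c where c: "r = (\<Sum>i\<le>n. smult (c i) (p t i))"
    using poly_expansion_in_degree_basis[of "p t", OF degree_p _ assms] by blast
  have "coeff r n = (\<Sum>i\<in>{n}. c i * coeff (p t i) n)"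
    unfolding c coeff_sum coeff_smult
    by (intro sum.mono_neutral_right) (auto simp: degree_p coeff_eq_0)
  moreover have "freud_functional t (r * p t n) = c n"
    unfolding c
    by (simp add: sum_distrib_right freud_functional_sum freud_functional_smult freud_functional_p_p
        if_distrib[of "times (c _)"] cong: if_cong)
  ultimately show ?thesis
    using lead_coeff_p_pos[of t n] by simp
qed

lemma freud_functional_mult_p_lower: "degree r < n \<Longrightarrow> freud_functional t (r * p t n) = 0"
  by (simp add: freud_functional_mult_p coeff_eq_0)

lemma freud_functional_pderiv:
  "freud_functional t (pderiv q) = freud_functional t (q * [:0, 2 * t, 0, 1:])"
proof -
  define G where "G = pderiv q - q * [:0, 2 * t, 0, 1:]"
  have "((\<lambda>x. poly q x * freud_weight t x) has_real_derivative poly G x * freud_weight t x) (at x)" for x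
    by (rule DERIV_mult'[OF poly_DERIV freud_weight_has_real_derivative, THEN DERIV_cong])
      (simp add: G_def algebra_simps eval_nat_numeral)
  then have "((\<lambda>x. poly G x * freud_weight t x) has_integral 0) UNIV"
    using poly_freud_weight_tendsto_zero poly_integrable
    by (rule has_integral_derivative_vanishing_at_infinity)
  then have "freud_functional t G = 0"
    using has_integral_freud_functional[of G t] has_integral_unique by blast
  then show ?thesis
    unfolding G_def freud_functional_diff by simp
qed

end

locale freud_recurrence = freud_orthonormal p for p :: "real \<Rightarrow> nat \<Rightarrow> real poly" +
  fixes a :: "nat \<Rightarrow> real \<Rightarrow> real"
  assumes a0: "\<And>t. a 0 t = 0"
    and apos: "\<And>n t. n \<ge> 1 \<Longrightarrow> a n t > 0"
    and recur: "\<And>n t. smult (a (n + 1) t) (p t (n + 1))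
                   = [:0, 1:] * p t n - smult (a n t) (p t (n - 1))"
begin

text \<open>Multiplication by x is written pCons 0, the simp normal form of [:0, 1:] * _.\<close>

lemma x_mult_p: "pCons 0 (p t n) = smult (a (n + 1) t) (p t (n + 1)) + smult (a n t) (p t (n - 1))"
  using recur[of n t] by (simp add: algebra_simps)

lemma lead_coeff_p_pred: "n \<ge> 1 \<Longrightarrow> coeff (p t (n - 1)) (n - 1) = a n t * coeff (p t n) n"
  using arg_cong[OF recur[of "n - 1" t], of "\<lambda>q. coeff q n"]
  by (cases n) (auto simp: degree_p coeff_eq_0)

lemma p_zero: "p t 0 = [:1 / sqrt (freud_moment 0 t):]"
proof -
  define c where "c = coeff (p t 0) 0"
  have "c > 0" and p0: "p t 0 = [:c:]"
    using lead_coeff_p_pos[of t 0] degree_p[of t 0] by (auto simp: c_def degree_0_id)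
  have "1 = freud_functional t (p t 0 * p t 0)"
    by (simp add: freud_functional_p_p)
  also have "\<dots> = c\<^sup>2 * freud_moment 0 t"
    unfolding p0 by (simp add: freud_functional_eq_moments[of _ 0] power2_eq_square)
  finally have "freud_moment 0 t = (1 / c)\<^sup>2"
    using \<open>c > 0\<close> by (simp add: field_simps)
  then have "sqrt (freud_moment 0 t) = 1 / c"
    using \<open>c > 0\<close> by simp
  then show ?thesis
    using \<open>c > 0\<close> p0 by simp
qed

lemma coeffs_differentiable_p_zero: "coeffs_differentiable (\<lambda>s. p s 0)"
  unfolding coeffs_differentiable_def
proof (intro allI)
  fix i t
  have "freud_moment 0 t > 0"
    using p_zero[of t] lead_coeff_p_pos[of t 0] by simp
  then have "(\<lambda>s. 1 / sqrt (freud_moment 0 s)) differentiable (at t)"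
    using freud_moment_has_real_derivative[of 0 t]
    by (intro differentiable_divide real_differentiable_sqrt) (auto simp: real_differentiable_def)
  then show "(\<lambda>s. coeff (p s 0) i) differentiable (at t)"
    unfolding p_zero by (cases i) auto
qed

lemma a_differentiable:
  assumes "coeffs_differentiable (\<lambda>s. p s (n - 1))" "coeffs_differentiable (\<lambda>s. p s n)"
  shows "a n differentiable (at t)"
proof (cases "n = 0")
  case True
  then have "a n = (\<lambda>s. 0)"
    using a0 by auto
  then show ?thesis by simp
next
  case False
  then have "a n s = coeff (p s (n - 1)) (n - 1) / coeff (p s n) n" for s
    using lead_coeff_p_pred[of n s] lead_coeff_p_pos[of s n] by simp
  then have "a n = (\<lambda>s. coeff (p s (n - 1)) (n - 1) / coeff (p s n) n)"
    by (rule ext)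
  then show ?thesis
    using assms lead_coeff_p_pos[of t n] unfolding coeffs_differentiable_def
    by (auto intro!: differentiable_divide)
qed

lemma coeffs_differentiable_p_Suc:
  assumes "coeffs_differentiable (\<lambda>s. p s (n - 1))" "coeffs_differentiable (\<lambda>s. p s n)"
  shows "coeffs_differentiable (\<lambda>s. p s (Suc n))"
proof (rule coeffs_differentiable_if_has_coeffwise_derivative)
  fix t
  define q where "q s = [:0, 1:] * p s n - smult (a n s) (p s (n - 1))" for s
  have q_p: "q s = smult (a (Suc n) s) (p s (Suc n))" for s
    using recur[of n s] by (simp add: q_def)
  obtain P where P: "has_coeffwise_derivative (\<lambda>s. p s n) P t"
    using has_coeffwise_derivative_exists[OF _ assms(2), where N = n] by (auto simp: degree_p)
  obtain P' where P': "has_coeffwise_derivative (\<lambda>s. p s (n - 1)) P' t"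
    using has_coeffwise_derivative_exists[OF _ assms(1), where N = "n - 1"] by (auto simp: degree_p)
  have "(a n has_real_derivative deriv (a n) t) (at t)"
    using a_differentiable[OF assms] by (simp add: DERIV_deriv_iff_real_differentiable)
  then obtain Dq where Dq: "has_coeffwise_derivative q Dq t"
    unfolding q_def
    using has_coeffwise_derivative_diff[OF has_coeffwise_derivative_mult[OF has_coeffwise_derivative_const P]
        has_coeffwise_derivative_smult[OF _ P']] by blast
  have "degree (q s) \<le> Suc n" for s
    unfolding q_p by (simp add: degree_p)
  then have "degree (q s * q s) \<le> 2 * Suc n" for s
    using degree_mult_le[of "q s" "q s"] by (metis add_mono mult_2 order.trans)
  then have "(\<lambda>s. freud_functional s (q s * q s)) differentiable (at t)"
    using freud_functional_has_real_derivative[OF _ has_coeffwise_derivative_mult[OF Dq Dq]]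
    unfolding real_differentiable_def by blast
  moreover have "freud_functional s (q s * q s) = (a (Suc n) s)\<^sup>2" for s
    unfolding q_p by (simp add: freud_functional_smult freud_functional_p_p power2_eq_square)
  ultimately have "(\<lambda>s. sqrt ((a (Suc n) s)\<^sup>2)) differentiable (at t)"
    using apos[of "Suc n" t] by (intro real_differentiable_sqrt) auto
  moreover have "sqrt ((a (Suc n) s)\<^sup>2) = a (Suc n) s" for s
    using apos[of "Suc n" s] by simp
  ultimately have "((\<lambda>s. 1 / a (Suc n) s) has_real_derivative deriv (\<lambda>s. 1 / a (Suc n) s) t) (at t)"
    using apos[of "Suc n" t] by (simp add: DERIV_deriv_iff_real_differentiable)
  moreover have "p s (Suc n) = smult (1 / a (Suc n) s) (q s)" for s
    using apos[of "Suc n" s] by (simp add: q_p)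
  ultimately show "\<exists>D. has_coeffwise_derivative (\<lambda>s. p s (Suc n)) D t"
    using has_coeffwise_derivative_smult[OF _ Dq] by auto
qed

lemma coeffs_differentiable_p: "coeffs_differentiable (\<lambda>s. p s n)"
proof (induction n rule: less_induct)
  case (less n)
  show ?case
  proof (cases n)
    case 0
    then show ?thesis by (simp add: coeffs_differentiable_p_zero)
  next
    case (Suc m)
    then show ?thesis
      using less[of m] less[of "m - 1"] coeffs_differentiable_p_Suc by simp
  qed
qed

lemma freud_functional_x_mult_p_succ: "freud_functional t (pCons 0 (p t m) * p t (m + 1)) = a (m + 1) t"
proof -
  have "freud_functional t (pCons 0 (p t m) * p t (m + 1)) = coeff (p t m) m / coeff (p t (m + 1)) (m + 1)"
    using freud_functional_mult_p[of "pCons 0 (p t m)" "m + 1" t] by (simp add: degree_p)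
  then show ?thesis
    using lead_coeff_p_pred[of "m + 1" t] lead_coeff_p_pos[of t "m + 1"] by simp
qed

lemma freud_functional_x_mult_p_pred: "n \<ge> 1 \<Longrightarrow> freud_functional t (pCons 0 (p t n) * p t (n - 1)) = a n t"
  using freud_functional_x_mult_p_succ[of t "n - 1"] by (simp add: mult.commute)

lemma freud_functional_x2_p_p: "freud_functional t ([:0, 0, 1:] * (p t n * p t n)) = (a (n + 1) t)\<^sup>2 + (a n t)\<^sup>2"
proof -
  have "[:0, 0, 1:] * (p t n * p t n) = pCons 0 (p t n) * pCons 0 (p t n)"
    by simp
  also have "\<dots> = smult (a (n + 1) t) (pCons 0 (p t n) * p t (n + 1)) + smult (a n t) (pCons 0 (p t n) * p t (n - 1))"
    by (subst (2) x_mult_p) (simp only: distrib_left mult_smult_right)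
  finally have "freud_functional t ([:0, 0, 1:] * (p t n * p t n))
      = a (n + 1) t * a (n + 1) t + a n t * freud_functional t (pCons 0 (p t n) * p t (n - 1))"
    by (simp only: freud_functional_add freud_functional_smult freud_functional_x_mult_p_succ)
  moreover have "a n t * freud_functional t (pCons 0 (p t n) * p t (n - 1)) = a n t * a n t"
    using freud_functional_x_mult_p_pred[of n t] a0[of t] by (cases "n = 0") auto
  ultimately show ?thesis
    by (simp add: power2_eq_square)
qed

lemma freud_functional_x3_p_p_pred:
  assumes "n \<ge> 1"
  shows "freud_functional t ([:0, 0, 0, 1:] * (p t n * p t (n - 1)))
           = a n t * ((a (n - 1) t)\<^sup>2 + (a n t)\<^sup>2 + (a (n + 1) t)\<^sup>2)"
proof -
  define r where "r = [:0, 0, 1:] * p t (n - 1)"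
  have "[:0, 0, 0, 1:] * (p t n * p t (n - 1)) = r * pCons 0 (p t n)"
    by (simp add: r_def algebra_simps)
  also have "\<dots> = smult (a (n + 1) t) (r * p t (n + 1)) + smult (a n t) (r * p t (n - 1))"
    by (subst x_mult_p) (simp only: distrib_left mult_smult_right)
  finally have "freud_functional t ([:0, 0, 0, 1:] * (p t n * p t (n - 1)))
      = a (n + 1) t * freud_functional t (r * p t (n + 1)) + a n t * freud_functional t (r * p t (n - 1))"
    by (simp only: freud_functional_add freud_functional_smult)
  moreover have "freud_functional t (r * p t (n - 1)) = (a n t)\<^sup>2 + (a (n - 1) t)\<^sup>2"
    using freud_functional_x2_p_p[of t "n - 1"] assms by (simp add: r_def mult.assoc)
  moreover have "freud_functional t (r * p t (n + 1)) = a n t * a (n + 1) t"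
  proof -
    have "degree r \<le> n + 1"
      unfolding r_def using assms degree_mult_le[of "[:0, 0, 1:]" "p t (n - 1)"] by (simp add: degree_p)
    moreover have "coeff r (n + 1) = coeff (p t (n - 1)) (n - 1)"
      using assms by (cases n) (simp_all add: r_def)
    ultimately have "freud_functional t (r * p t (n + 1)) = coeff (p t (n - 1)) (n - 1) / coeff (p t (n + 1)) (n + 1)"
      by (simp add: freud_functional_mult_p)
    then show ?thesis
      using assms lead_coeff_p_pred[of n t] lead_coeff_p_pred[of "n + 1" t] lead_coeff_p_pos[of t "n + 1"]
      by simp
  qed
  ultimately show ?thesis
    by (simp add: algebra_simps power2_eq_square)
qed

lemma lead_coeff_p_has_real_derivative:
  "((\<lambda>s. coeff (p s n) n) has_real_derivative coeff (p t n) n * ((a n t)\<^sup>2 + (a (n + 1) t)\<^sup>2) / 2) (at t)"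
proof -
  \<comment> \<open>Differentiate the normalisation of p_n^2: only the top coefficient of the derivative of p_n
    survives the pairing with p_n.\<close>
  obtain D where D: "has_coeffwise_derivative (\<lambda>s. p s n) D t"
    using has_coeffwise_derivative_exists[OF _ coeffs_differentiable_p, where N = n]
    by (auto simp: degree_p)
  have "degree (p s n * p s n) \<le> 2 * n" for s
    using degree_mult_le[of "p s n" "p s n"] by (simp add: degree_p)
  then have "((\<lambda>s. freud_functional s (p s n * p s n)) has_real_derivative
      freud_functional t (D * p t n + p t n * D) - freud_functional t ([:0, 0, 1:] * (p t n * p t n))) (at t)"
    by (rule freud_functional_has_real_derivative[OF _ has_coeffwise_derivative_mult[OF D D]])
  moreover have "((\<lambda>s. freud_functional s (p s n * p s n)) has_real_derivative 0) (at t)"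
    by (simp add: freud_functional_p_p)
  ultimately have "freud_functional t (D * p t n + p t n * D) = freud_functional t ([:0, 0, 1:] * (p t n * p t n))"
    using DERIV_unique by fastforce
  moreover have "freud_functional t (D * p t n + p t n * D) = 2 * (coeff D n / coeff (p t n) n)"
    using degree_le_if_has_coeffwise_derivative[OF _ D, of n]
    by (simp only: freud_functional_add mult.commute[of "p t n"]) (simp add: degree_p freud_functional_mult_p)
  ultimately have "coeff D n = coeff (p t n) n * ((a n t)\<^sup>2 + (a (n + 1) t)\<^sup>2) / 2"
    using lead_coeff_p_pos[of t n] freud_functional_x2_p_p[of t n] by (simp add: field_simps)
  moreover have "((\<lambda>s. coeff (p s n) n) has_real_derivative coeff D n) (at t)"
    using D unfolding has_coeffwise_derivative_def by blast
  ultimately show ?thesis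
    by (simp only:)
qed

lemma toda_equation: "(a n has_real_derivative a n t * ((a (n - 1) t)\<^sup>2 - (a (n + 1) t)\<^sup>2) / 2) (at t)"
proof (cases "n = 0")
  case True
  then have "a n = (\<lambda>s. 0)"
    using a0 by auto
  then show ?thesis
    using True a0 by simp
next
  case False
  define k where "k m s = coeff (p s m) m" for m s
  have k_pred: "k (n - 1) s = a n s * k n s" and k_nz: "k n s \<noteq> 0" for s
    using False lead_coeff_p_pred[of n s] lead_coeff_p_pos[of s n] by (auto simp: k_def)
  then have "a n s = k (n - 1) s / k n s" for s
    using k_pred[of s] k_nz[of s] by simp
  then have a_eq: "a n = (\<lambda>s. k (n - 1) s / k n s)"
    by (rule ext)
  have "((\<lambda>s. k (n - 1) s / k n s) has_real_derivative
      (k (n - 1) t * ((a (n - 1) t)\<^sup>2 + (a n t)\<^sup>2) / 2 * k n t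
        - k (n - 1) t * (k n t * ((a n t)\<^sup>2 + (a (n + 1) t)\<^sup>2) / 2)) / (k n t * k n t)) (at t)"
    using lead_coeff_p_has_real_derivative[of "n - 1" t] lead_coeff_p_has_real_derivative[of n t]
      False k_nz[of t]
    by (intro DERIV_divide) (simp_all add: k_def)
  moreover have "(k (n - 1) t * ((a (n - 1) t)\<^sup>2 + (a n t)\<^sup>2) / 2 * k n t
        - k (n - 1) t * (k n t * ((a n t)\<^sup>2 + (a (n + 1) t)\<^sup>2) / 2)) / (k n t * k n t)
      = a n t * ((a (n - 1) t)\<^sup>2 - (a (n + 1) t)\<^sup>2) / 2"
    using k_pred[of t] k_nz[of t] by (simp add: field_simps power2_eq_square)
  ultimately show ?thesis
    unfolding a_eq[symmetric] by (rule DERIV_cong)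
qed

lemma freud_functional_pderiv_p_p:
  assumes "n \<ge> 1"
  shows "freud_functional t (pderiv (p t n * p t (n - 1))) = real n / a n t"
proof -
  have "freud_functional t (pderiv (p t n * p t (n - 1)))
      = freud_functional t (p t n * pderiv (p t (n - 1))) + freud_functional t (p t (n - 1) * pderiv (p t n))"
    by (simp only: pderiv_mult freud_functional_add)
  moreover have "freud_functional t (p t n * pderiv (p t (n - 1))) = 0"
    using freud_functional_mult_p_lower[of "pderiv (p t (n - 1))" n t] assms
    by (simp add: degree_pderiv degree_p mult.commute)
  moreover have "freud_functional t (p t (n - 1) * pderiv (p t n)) = real n * coeff (p t n) n / coeff (p t (n - 1)) (n - 1)"
    using freud_functional_mult_p[of "pderiv (p t n)" "n - 1" t] assms
    by (simp add: degree_pderiv degree_p coeff_pderiv mult.commute)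
  ultimately show ?thesis
    using assms lead_coeff_p_pred[of n t] lead_coeff_p_pos[of t n] by simp
qed

lemma freud_string_equation:
  "(a n t)\<^sup>2 * ((a (n - 1) t)\<^sup>2 + (a n t)\<^sup>2 + (a (n + 1) t)\<^sup>2) + 2 * t * (a n t)\<^sup>2 = real n"
proof (cases "n = 0")
  case True
  then show ?thesis by (simp add: a0)
next
  case False
  have "p t n * p t (n - 1) * [:0, 2 * t, 0, 1:]
      = [:0, 0, 0, 1:] * (p t n * p t (n - 1)) + smult (2 * t) (pCons 0 (p t n) * p t (n - 1))"
    by (simp add: algebra_simps)
  then have "real n / a n t = a n t * ((a (n - 1) t)\<^sup>2 + (a n t)\<^sup>2 + (a (n + 1) t)\<^sup>2) + 2 * t * a n t"
    using False freud_functional_pderiv[of t "p t n * p t (n - 1)"]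
    by (simp only: freud_functional_pderiv_p_p freud_functional_add freud_functional_smult
        freud_functional_x3_p_p_pred freud_functional_x_mult_p_pred)
  then show ?thesis
    using apos[of n t] False by (simp add: field_simps power2_eq_square)
qed

lemma deriv_a: "deriv (a n) = (\<lambda>s. a n s * ((a (n - 1) s)\<^sup>2 - (a (n + 1) s)\<^sup>2) / 2)"
  using toda_equation DERIV_imp_deriv by blast

lemma deriv_a_has_real_derivative:
  assumes "n \<ge> 1"
  shows "(deriv (a n) has_real_derivative
            a n t * (((a (n - 1) t)\<^sup>2 - (a (n + 1) t)\<^sup>2)\<^sup>2 / 4
              + ((a (n - 1) t)\<^sup>2 * ((a (n - 2) t)\<^sup>2 - (a n t)\<^sup>2)
                 - (a (n + 1) t)\<^sup>2 * ((a n t)\<^sup>2 - (a (n + 2) t)\<^sup>2)) / 2)) (at t)"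
  unfolding deriv_a
  using assms toda_equation[of n t] toda_equation[of "n - 1" t] toda_equation[of "n + 1" t]
  by (auto intro!: derivative_eq_intros simp: numeral_2_eq_2) (simp add: field_simps power2_eq_square)

lemma a_second_derivative_eq:
  assumes "n \<ge> 1"
  shows "4 * a n t ^ 3 * deriv (deriv (a n)) t
           = (3 * a n t ^ 4 + 2 * t * (a n t)\<^sup>2 - real n) * (a n t ^ 4 + 2 * t * (a n t)\<^sup>2 + real n)"
proof -
  have "(a (n - 1) t)\<^sup>2 * ((a (n - 2) t)\<^sup>2 + (a (n - 1) t)\<^sup>2 + (a n t)\<^sup>2)
      + 2 * t * (a (n - 1) t)\<^sup>2 = real n - 1"
    using freud_string_equation[of "n - 1" t] assms by (simp add: of_nat_diff numeral_2_eq_2)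
  moreover have "(a (n + 1) t)\<^sup>2 * ((a n t)\<^sup>2 + (a (n + 1) t)\<^sup>2 + (a (n + 2) t)\<^sup>2)
      + 2 * t * (a (n + 1) t)\<^sup>2 = real n + 1"
    using freud_string_equation[of "n + 1" t] by simp
  ultimately show ?thesis
    using DERIV_imp_deriv[OF deriv_a_has_real_derivative[OF assms]]
      toda_string_second_derivative_identity freud_string_equation[of n t] by simp
qed

end

theorem mainTheorem12:
  fixes p :: "real \<Rightarrow> nat \<Rightarrow> real poly"
    and a :: "nat \<Rightarrow> real \<Rightarrow> real"
  assumes orth: "\<And>t. orthonormal_system t (p t)"
    and a0: "\<And>t. a 0 t = 0"
    and apos: "\<And>n t. n \<ge> 1 \<Longrightarrow> a n t > 0"
    and recur: "\<And>n t. smult (a (n + 1) t) (p t (n + 1))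
                   = [:0, 1:] * p t n - smult (a n t) (p t (n - 1))"
    and n: "n \<ge> 1"
  shows "a n t ^ 2 * (a (n - 1) t ^ 2 + a n t ^ 2 + a (n + 1) t ^ 2) + 2 * t * a n t ^ 2 = real n \<and>
         (a n has_real_derivative deriv (a n) t) (at t) \<and>
         (deriv (a n) has_real_derivative deriv (deriv (a n)) t) (at t) \<and>
         4 * a n t ^ 3 * deriv (deriv (a n)) t
           = (3 * a n t ^ 4 + 2 * t * a n t ^ 2 - real n) * (a n t ^ 4 + 2 * t * a n t ^ 2 + real n) \<and>
         (let u = (\<lambda>s. a n s ^ 2); \<alpha> = - real n / 2; \<beta> = - (real n ^ 2) / 2 in
           (u has_real_derivative deriv u t) (at t) \<and>
           (deriv u has_real_derivative deriv (deriv u) t) (at t) \<and>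
           deriv (deriv u) t = (deriv u t) ^ 2 / (2 * u t) + 3 * u t ^ 3 / 2 + 4 * t * u t ^ 2
                               + 2 * (t ^ 2 - \<alpha>) * u t + \<beta> / u t)"
proof -
  interpret freud_recurrence p a
    using orth a0 apos recur by unfold_locales auto
  have a': "(a n has_real_derivative deriv (a n) s) (at s)" for s
    using toda_equation by (simp add: deriv_a)
  have a'': "(deriv (a n) has_real_derivative deriv (deriv (a n)) t) (at t)"
    using deriv_a_has_real_derivative[OF n, of t]
    unfolding DERIV_deriv_iff_real_differentiable real_differentiable_def by blast
  define u where "u = (\<lambda>s. (a n s)\<^sup>2)"
  have u': "(u has_real_derivative 2 * a n t * deriv (a n) t) (at t)"
    and u'': "(deriv u has_real_derivative 2 * (deriv (a n) t)\<^sup>2 + 2 * a n t * deriv (deriv (a n)) t) (at t)"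
    using square_has_second_derivative[OF a' a''] unfolding u_def by blast+
  show ?thesis
    unfolding Let_def u_def[symmetric]
    using freud_string_equation[of n t] a' a'' a_second_derivative_eq[OF n] u' u''
      DERIV_imp_deriv[OF u'] DERIV_imp_deriv[OF u'']
      painleve_iv_of_square[OF apos[OF n] a_second_derivative_eq[OF n]]
    by (simp add: u_def)
qed

end
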